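(* Let $X,Y$ be finite sets, $\mu\in\mathcal P(X)$, $\nu\in\mathcal P(Y)$, $M$ a positive integer, and $\pi_1,\pi_2\in\Pi(\mu,\nu)$. Define the assignment graph as the bipartite directed graph on vertex set $X\sqcup Y$ with edge set $\{x\to y:\pi_2(x,y)\ge\mu(x)\nu(y)/M\}\sqcup\{y\to x:\pi_1(x,y)\ge\mu(x)\nu(y)/M\}$. Then: (i) every vertex has at least one incoming and at least one outgoing edge; (ii) if $X_0\subset X$, $Y_0\subset Y$ are such that there is no edge from $X_0\cup Y_0$ to a vertex outside $X_0\cup Y_0$, then $|\mu(X_0)-\nu(Y_0)|<1/M$; the same holds if there is no edge from a vertex outside $X_0\cup Y_0$ into $X_0\cup Y_0$; if moreover $\mu=r/M$, $\nu=s/M$ with $r\in\mathbb Z_{++}^X$, $s\in\mathbb Z_{++}^Y$, then $\mu(X_0)=\nu(Y_0)$; (iii) if $\mu=r/M$, $\nu=s/M$ with $r\in\mathbb Z_{++}^X$, $s\in\mathbb Z_{++}^Y$, and $\{(X_i,Y_i)\}_{i=1}^R$ are the vertex sets of the strongly connected components of the assignment graph (each $X_i\subset X$, $Y_i\subset Y$), then $\{X_i\}_{i=1}^R$ and $\{Y_i\}_{i=1}^R$ are partitions of $X$ and $Y$ and $\mu(X_i)=\nu(Y_i)$ for $i=1,\dots,R$.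
   Context: $\Pi(\mu,\nu)=\{\pi\in\mathbb R_+^{X\times Y}:\sum_y\pi(x,y)=\mu(x)\ \forall x,\ \sum_x\pi(x,y)=\nu(y)\ \forall y\}$. For $A\subset X$, $\mu(A)=\sum_{x\in A}\mu(x)$. $\mathbb Z_{++}$ denotes strictly positive integers. *)

theory Defs
  imports Complex_Main "HOL-Library.Disjoint_Sets"
begin

definition is_prob :: "('a::finite \<Rightarrow> real) \<Rightarrow> bool" where
  "is_prob \<mu> \<longleftrightarrow> (\<forall>x. \<mu> x \<ge> 0) \<and> sum \<mu> UNIV = 1"

definition couplings :: "('x::finite \<Rightarrow> real) \<Rightarrow> ('y::finite \<Rightarrow> real) \<Rightarrow> ('x \<times> 'y \<Rightarrow> real) set" where
  "couplings \<mu> \<nu> = {\<pi>. (\<forall>p. \<pi> p \<ge> 0) \<and> (\<forall>x. (\<Sum>y\<in>UNIV. \<pi> (x, y)) = \<mu> x)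
                       \<and> (\<forall>y. (\<Sum>x\<in>UNIV. \<pi> (x, y)) = \<nu> y)}"

fun assign_edge :: "nat \<Rightarrow> ('x \<Rightarrow> real) \<Rightarrow> ('y \<Rightarrow> real) \<Rightarrow> ('x \<times> 'y \<Rightarrow> real) \<Rightarrow> ('x \<times> 'y \<Rightarrow> real)
    \<Rightarrow> 'x + 'y \<Rightarrow> 'x + 'y \<Rightarrow> bool" where
  "assign_edge M \<mu> \<nu> \<pi>1 \<pi>2 (Inl x) (Inr y) = (\<pi>2 (x, y) \<ge> \<mu> x * \<nu> y / real M)"
| "assign_edge M \<mu> \<nu> \<pi>1 \<pi>2 (Inr y) (Inl x) = (\<pi>1 (x, y) \<ge> \<mu> x * \<nu> y / real M)"
| "assign_edge M \<mu> \<nu> \<pi>1 \<pi>2 (Inl x) (Inl x') = False"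
| "assign_edge M \<mu> \<nu> \<pi>1 \<pi>2 (Inr y) (Inr y') = False"

definition sccs :: "('v \<Rightarrow> 'v \<Rightarrow> bool) \<Rightarrow> 'v set set" where
  "sccs E = {{v. E\<^sup>*\<^sup>* u v \<and> E\<^sup>*\<^sup>* v u} | u. True}"

definition out_closed :: "('v \<Rightarrow> 'v \<Rightarrow> bool) \<Rightarrow> 'v set \<Rightarrow> bool" where
  "out_closed E S \<longleftrightarrow> (\<forall>u v. u \<in> S \<longrightarrow> v \<notin> S \<longrightarrow> \<not> E u v)"

definition in_closed :: "('v \<Rightarrow> 'v \<Rightarrow> bool) \<Rightarrow> 'v set \<Rightarrow> bool" where
  "in_closed E S \<longleftrightarrow> (\<forall>u v. u \<notin> S \<longrightarrow> v \<in> S \<longrightarrow> \<not> E u v)"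

end

theory Submission
  imports Defs
begin

text \<open>A vertex x has an outgoing edge, since otherwise
  \<mu> x = (\<Sum>y. \<pi>2 (x, y)) < \<mu> x \<nu>(Y) / M \<le> \<mu> x; the other cases are symmetric.
  If no edge leaves X0 \<union> Y0, then \<pi>2 puts mass below \<mu> x \<nu> y / M on every pair in
  X0 \<times> -Y0, so \<mu>(X0) < \<nu>(Y0) + \<mu>(X0) \<nu>(-Y0) / M \<le> \<nu>(Y0) + 1/M, and \<pi>1 gives the reverse
  inequality; a set with no incoming edges is the complement of one with no outgoing edges.
  With marginals in \<int>/M the gap is a multiple of 1/M, hence zero. A strongly connected
  component is the set of vertices reachable from a root minus those that cannot reach back,
  a difference of two sets without outgoing edges, so it is balanced as well, and positivity
  of the weights forces it to meet both X and Y.\<close>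

lemma sum_Compl_prob:
  assumes "is_prob \<mu>"
  shows "sum \<mu> (-A) = 1 - sum \<mu> A"
  using assms sum.subset_diff[of A UNIV \<mu>] by (simp add: is_prob_def Compl_eq_Diff_UNIV)

lemma prob_sum_bounds:
  assumes "is_prob \<mu>"
  shows "0 \<le> sum \<mu> A" and "sum \<mu> A \<le> 1"
  using assms sum_Compl_prob[OF assms, of A] sum_nonneg[of "-A" \<mu>]
  by (auto simp: is_prob_def intro: sum_nonneg)

lemma couplings_swap:
  assumes "\<pi> \<in> couplings \<mu> \<nu>"
  shows "\<pi> \<circ> prod.swap \<in> couplings \<nu> \<mu>"
  using assms by (simp add: couplings_def)

lemma coupling_nonneg_marginal:
  assumes "\<pi> \<in> couplings \<mu> \<nu>"
  shows "\<mu> x \<ge> 0"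
proof -
  have "\<mu> x = (\<Sum>y\<in>UNIV. \<pi> (x, y))" using assms by (simp add: couplings_def)
  also have "\<dots> \<ge> 0" using assms unfolding couplings_def by (blast intro: sum_nonneg)
  finally show ?thesis .
qed

lemma coupling_row_witness:
  assumes "\<pi> \<in> couplings \<mu> \<nu>" and "is_prob \<nu>" and "c \<ge> 1"
  shows "\<exists>y. \<pi> (x, y) \<ge> \<mu> x * \<nu> y / c"
proof (rule ccontr)
  assume "\<not> ?thesis"
  then have "\<mu> x = (\<Sum>y\<in>UNIV. \<pi> (x, y))" and "\<And>y. \<pi> (x, y) < \<mu> x * \<nu> y / c"
    using assms(1) by (auto simp: couplings_def not_le)
  then have "\<mu> x < (\<Sum>y\<in>UNIV. \<mu> x * \<nu> y / c)"
    by (simp add: sum_strict_mono)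
  also have "\<dots> = \<mu> x / c"
    using assms(2) by (simp add: is_prob_def flip: sum_distrib_left sum_divide_distrib)
  also have "\<dots> \<le> \<mu> x"
    using assms(3) coupling_nonneg_marginal[OF assms(1)] frac_le[of "\<mu> x" "\<mu> x" 1 c] by simp
  finally show False by simp
qed

lemma coupling_cut_bound:
  assumes \<pi>: "\<pi> \<in> couplings \<mu> \<nu>" and "is_prob \<mu>" "is_prob \<nu>" "c > 0"
    and small: "\<And>x y. x \<in> A \<Longrightarrow> y \<notin> B \<Longrightarrow> \<pi> (x, y) < \<mu> x * \<nu> y / c"
  shows "sum \<mu> A - sum \<nu> B < 1 / c"
proof -
  note \<mu>A = prob_sum_bounds[OF assms(2), of A] and \<nu>B = prob_sum_bounds[OF assms(3)]
  have "1 / c > 0" using \<open>c > 0\<close> by simp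
  consider "A = {}" | "B = UNIV" | "A \<noteq> {}" "-B \<noteq> {}" by auto
  then show ?thesis
  proof cases
    case 1
    then show ?thesis using \<nu>B[of B] \<open>1 / c > 0\<close> by (simp only: sum.empty)
  next
    case 2
    then have "sum \<nu> B = 1" using assms(3) by (simp add: is_prob_def)
    then show ?thesis using \<mu>A \<open>1 / c > 0\<close> by linarith
  next
    case 3
    have "sum \<mu> A = (\<Sum>x\<in>A. \<Sum>y\<in>B. \<pi> (x, y)) + (\<Sum>x\<in>A. \<Sum>y\<in>-B. \<pi> (x, y))"
    proof -
      have "\<mu> x = (\<Sum>y\<in>B. \<pi> (x, y)) + (\<Sum>y\<in>-B. \<pi> (x, y))" for x
        using \<pi> sum.subset_diff[of B UNIV "\<lambda>y. \<pi> (x, y)"]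
        by (simp add: couplings_def Compl_eq_Diff_UNIV)
      then show ?thesis by (simp add: sum.distrib)
    qed
    also have "(\<Sum>x\<in>A. \<Sum>y\<in>B. \<pi> (x, y)) \<le> (\<Sum>x\<in>UNIV. \<Sum>y\<in>B. \<pi> (x, y))"
      using \<pi> by (intro sum_mono2) (auto simp: couplings_def intro: sum_nonneg)
    also have "\<dots> = sum \<nu> B"
      using \<pi> by (subst sum.swap) (simp add: couplings_def)
    also have "(\<Sum>x\<in>A. \<Sum>y\<in>-B. \<pi> (x, y)) < (\<Sum>x\<in>A. \<Sum>y\<in>-B. \<mu> x * \<nu> y / c)"
      using 3 by (intro sum_strict_mono) (auto intro: small)
    also have "\<dots> = sum \<mu> A * sum \<nu> (-B) / c"
      by (simp add: sum_product sum_divide_distrib)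
    also have "\<dots> \<le> 1 / c"
      using \<mu>A \<nu>B \<open>c > 0\<close> by (intro divide_right_mono mult_le_one) simp_all
    finally show ?thesis by simp
  qed
qed

lemma scaled_int_sums_eq:
  fixes r :: "'a \<Rightarrow> int" and s :: "'b \<Rightarrow> int" and c :: real
  assumes "c > 0"
    and "\<bar>(\<Sum>x\<in>A. of_int (r x) / c) - (\<Sum>y\<in>B. of_int (s y) / c)\<bar> < 1 / c"
  shows "(\<Sum>x\<in>A. of_int (r x) / c) = (\<Sum>y\<in>B. of_int (s y) / c)"
proof -
  have "\<bar>of_int (sum r A - sum s B)\<bar> / c < 1 / c"
    using assms by (simp add: abs_divide flip: sum_divide_distrib diff_divide_distrib)
  then have "\<bar>of_int (sum r A - sum s B)\<bar> < (1 :: real)"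
    using assms(1) by (simp add: divide_less_cancel)
  then have "sum r A = sum s B" by linarith
  then show ?thesis by (simp flip: sum_divide_distrib of_int_sum)
qed

lemma balanced_sums_nonempty:
  fixes f :: "'a \<Rightarrow> real" and g :: "'b \<Rightarrow> real"
  assumes "finite A" "finite B" "\<And>x. f x > 0" "\<And>y. g y > 0"
    and "sum f A = sum g B" and "A \<noteq> {} \<or> B \<noteq> {}"
  shows "A \<noteq> {}" and "B \<noteq> {}"
  using assms sum_pos[of A f] sum_pos[of B g] by fastforce+

lemma in_closed_iff_out_closed_Compl: "in_closed E S \<longleftrightarrow> out_closed E (-S)"
  unfolding in_closed_def out_closed_def by auto

lemma sccs_cover: "\<exists>C\<in>sccs E. v \<in> C"
  unfolding sccs_def by (intro bexI[of _ "{x. E\<^sup>*\<^sup>* v x \<and> E\<^sup>*\<^sup>* x v}"]) auto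

lemma scc_class_eq:
  assumes "E\<^sup>*\<^sup>* u v" "E\<^sup>*\<^sup>* v u"
  shows "{x. E\<^sup>*\<^sup>* u x \<and> E\<^sup>*\<^sup>* x u} = {x. E\<^sup>*\<^sup>* v x \<and> E\<^sup>*\<^sup>* x v}"
  using assms rtranclp_trans[of E] by blast

lemma sccs_disjoint:
  assumes "C \<in> sccs E" "D \<in> sccs E" "v \<in> C" "v \<in> D"
  shows "C = D"
proof -
  obtain u w where "C = {x. E\<^sup>*\<^sup>* u x \<and> E\<^sup>*\<^sup>* x u}" "D = {x. E\<^sup>*\<^sup>* w x \<and> E\<^sup>*\<^sup>* x w}"
    using assms(1,2) unfolding sccs_def by blast
  with assms(3,4) show ?thesis
    using scc_class_eq[of E u v] scc_class_eq[of E w v] by simp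
qed

lemma sccs_nonempty: "C \<in> sccs E \<Longrightarrow> C \<noteq> {}"
  unfolding sccs_def by auto

lemma disjoint_family_on_sccs_preimage: "disjoint_family_on (\<lambda>C. {x. h x \<in> C}) (sccs E)"
  unfolding disjoint_family_on_def using sccs_disjoint[of _ E] by blast

lemma UN_sccs_preimage: "(\<Union>C\<in>sccs E. {x. h x \<in> C}) = UNIV"
  using sccs_cover[of E] by blast

lemma out_closed_reachable: "out_closed E {v. E\<^sup>*\<^sup>* u v}"
  unfolding out_closed_def by (auto intro: rtranclp.rtrancl_into_rtrancl)

lemma out_closed_reachable_not_back: "out_closed E {v. E\<^sup>*\<^sup>* u v \<and> \<not> E\<^sup>*\<^sup>* v u}"
  unfolding out_closed_def
  by (auto intro: rtranclp.rtrancl_into_rtrancl converse_rtranclp_into_rtranclp)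

lemma sccs_sum_eq_0:
  fixes w :: "'v::finite \<Rightarrow> 'a::ab_group_add"
  assumes closed: "\<And>S. out_closed E S \<Longrightarrow> sum w S = 0" and "C \<in> sccs E"
  shows "sum w C = 0"
proof -
  obtain u where C: "C = {v. E\<^sup>*\<^sup>* u v} - {v. E\<^sup>*\<^sup>* u v \<and> \<not> E\<^sup>*\<^sup>* v u}"
    using \<open>C \<in> sccs E\<close> unfolding sccs_def by blast
  show ?thesis
    unfolding C
    by (subst sum_diff) (auto simp: closed out_closed_reachable out_closed_reachable_not_back)
qed

lemma bipartite_sccs_balanced:
  fixes E :: "'x::finite + 'y::finite \<Rightarrow> 'x + 'y \<Rightarrow> bool"
    and \<mu> :: "'x \<Rightarrow> real" and \<nu> :: "'y \<Rightarrow> real"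
  assumes closed: "\<And>X Y. out_closed E (Inl ` X \<union> Inr ` Y) \<Longrightarrow> sum \<mu> X = sum \<nu> Y"
    and "C \<in> sccs E"
  shows "sum \<mu> {x. Inl x \<in> C} = sum \<nu> {y. Inr y \<in> C}"
proof -
  define w where "w = case_sum \<mu> (\<lambda>y. - \<nu> y)"
  have split: "S = {x. Inl x \<in> S} <+> {y. Inr y \<in> S}" for S :: "('x + 'y) set"
  proof (rule set_eqI)
    show "v \<in> S \<longleftrightarrow> v \<in> {x. Inl x \<in> S} <+> {y. Inr y \<in> S}" for v
      by (cases v) auto
  qed
  have w_sum: "sum w S = sum \<mu> {x. Inl x \<in> S} - sum \<nu> {y. Inr y \<in> S}" for S
    by (subst split) (simp add: sum.Plus w_def comp_def sum_negf)
  have "sum w S = 0" if "out_closed E S" for S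
    using closed[of "{x. Inl x \<in> S}" "{y. Inr y \<in> S}"] that split[of S]
    by (simp add: w_sum Plus_def)
  then show ?thesis
    using sccs_sum_eq_0[OF _ \<open>C \<in> sccs E\<close>, of w] by (simp add: w_sum)
qed

lemma bipartite_sccs_sides_nonempty:
  fixes E :: "'x::finite + 'y::finite \<Rightarrow> 'x + 'y \<Rightarrow> bool"
    and \<mu> :: "'x \<Rightarrow> real" and \<nu> :: "'y \<Rightarrow> real"
  assumes "C \<in> sccs E" "sum \<mu> {x. Inl x \<in> C} = sum \<nu> {y. Inr y \<in> C}"
    and "\<And>x. \<mu> x > 0" "\<And>y. \<nu> y > 0"
  shows "{x. Inl x \<in> C} \<noteq> {}" and "{y. Inr y \<in> C} \<noteq> {}"
proof -
  obtain v where "v \<in> C" using sccs_nonempty[OF assms(1)] by blast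
  then have "{x. Inl x \<in> C} \<noteq> {} \<or> {y. Inr y \<in> C} \<noteq> {}"
    by (cases v) auto
  then show "{x. Inl x \<in> C} \<noteq> {}" and "{y. Inr y \<in> C} \<noteq> {}"
    using balanced_sums_nonempty[OF _ _ assms(3,4,2)] by simp_all
qed

lemma Compl_Inl_Inr_image: "- (Inl ` X \<union> Inr ` Y) = Inl ` (- X) \<union> Inr ` (- Y)"
proof (rule set_eqI)
  show "v \<in> - (Inl ` X \<union> Inr ` Y) \<longleftrightarrow> v \<in> Inl ` (- X) \<union> Inr ` (- Y)" for v
    by (cases v) auto
qed

context
  fixes \<mu> :: "'x::finite \<Rightarrow> real" and \<nu> :: "'y::finite \<Rightarrow> real" and M :: nat
    and \<pi>1 \<pi>2 :: "'x \<times> 'y \<Rightarrow> real"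
  assumes \<mu>: "is_prob \<mu>" and \<nu>: "is_prob \<nu>" and M: "M > 0"
    and \<pi>1: "\<pi>1 \<in> couplings \<mu> \<nu>" and \<pi>2: "\<pi>2 \<in> couplings \<mu> \<nu>"
begin

lemma assign_edge_in_out:
  "(\<exists>u. assign_edge M \<mu> \<nu> \<pi>1 \<pi>2 u v) \<and> (\<exists>w. assign_edge M \<mu> \<nu> \<pi>1 \<pi>2 v w)"
proof -
  have "real M \<ge> 1" using M by simp
  show ?thesis
  proof (cases v)
    case (Inl x)
    obtain y where "\<pi>1 (x, y) \<ge> \<mu> x * \<nu> y / M"
      using coupling_row_witness[OF \<pi>1 \<nu> \<open>real M \<ge> 1\<close>] by blast
    moreover obtain y' where "\<pi>2 (x, y') \<ge> \<mu> x * \<nu> y' / M"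
      using coupling_row_witness[OF \<pi>2 \<nu> \<open>real M \<ge> 1\<close>] by blast
    ultimately show ?thesis
      using Inl by (metis assign_edge.simps(1,2))
  next
    case (Inr y)
    obtain x where "(\<pi>2 \<circ> prod.swap) (y, x) \<ge> \<nu> y * \<mu> x / M"
      using coupling_row_witness[OF couplings_swap[OF \<pi>2] \<mu> \<open>real M \<ge> 1\<close>] by blast
    moreover obtain x' where "(\<pi>1 \<circ> prod.swap) (y, x') \<ge> \<nu> y * \<mu> x' / M"
      using coupling_row_witness[OF couplings_swap[OF \<pi>1] \<mu> \<open>real M \<ge> 1\<close>] by blast
    ultimately show ?thesis
      using Inr by (metis assign_edge.simps(1,2) comp_apply mult.commute swap_simp)
  qed
qed

lemma assign_out_closed_bound:
  assumes closed: "out_closed (assign_edge M \<mu> \<nu> \<pi>1 \<pi>2) (Inl ` X \<union> Inr ` Y)"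
  shows "\<bar>sum \<mu> X - sum \<nu> Y\<bar> < 1 / real M"
proof -
  have no_edge: "\<not> assign_edge M \<mu> \<nu> \<pi>1 \<pi>2 u v"
    if "u \<in> Inl ` X \<union> Inr ` Y" "v \<notin> Inl ` X \<union> Inr ` Y" for u v
    using closed that unfolding out_closed_def by blast
  have "sum \<mu> X - sum \<nu> Y < 1 / real M"
  proof (rule coupling_cut_bound[OF \<pi>2 \<mu> \<nu>])
    show "\<pi>2 (x, y) < \<mu> x * \<nu> y / real M" if "x \<in> X" "y \<notin> Y" for x y
      using no_edge[of "Inl x" "Inr y"] that by (auto simp: not_le)
  qed (use M in simp)
  moreover have "sum \<nu> Y - sum \<mu> X < 1 / real M"
  proof (rule coupling_cut_bound[OF couplings_swap[OF \<pi>1] \<nu> \<mu>])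
    show "(\<pi>1 \<circ> prod.swap) (y, x) < \<nu> y * \<mu> x / real M" if "y \<in> Y" "x \<notin> X" for x y
      using no_edge[of "Inr y" "Inl x"] that by (auto simp: not_le mult.commute)
  qed (use M in simp)
  ultimately show ?thesis by linarith
qed

lemma assign_in_closed_bound:
  assumes "in_closed (assign_edge M \<mu> \<nu> \<pi>1 \<pi>2) (Inl ` X \<union> Inr ` Y)"
  shows "\<bar>sum \<mu> X - sum \<nu> Y\<bar> < 1 / real M"
proof -
  have "out_closed (assign_edge M \<mu> \<nu> \<pi>1 \<pi>2) (Inl ` (- X) \<union> Inr ` (- Y))"
    using assms by (simp only: in_closed_iff_out_closed_Compl Compl_Inl_Inr_image)
  then have "\<bar>sum \<mu> (- X) - sum \<nu> (- Y)\<bar> < 1 / real M"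
    by (rule assign_out_closed_bound)
  then show ?thesis
    by (simp add: sum_Compl_prob[OF \<mu>] sum_Compl_prob[OF \<nu>] abs_minus_commute)
qed

lemma assign_graph_integral_balance:
  fixes r :: "'x \<Rightarrow> int" and s :: "'y \<Rightarrow> int"
  assumes r: "\<And>x. r x > 0" and s: "\<And>y. s y > 0"
    and \<mu>_eq: "\<mu> = (\<lambda>x. of_int (r x) / real M)" and \<nu>_eq: "\<nu> = (\<lambda>y. of_int (s y) / real M)"
  defines "E \<equiv> assign_edge M \<mu> \<nu> \<pi>1 \<pi>2"
  shows "(\<forall>X Y. out_closed E (Inl ` X \<union> Inr ` Y) \<or> in_closed E (Inl ` X \<union> Inr ` Y)
              \<longrightarrow> sum \<mu> X = sum \<nu> Y)"
    and "\<forall>C\<in>sccs E. sum \<mu> {x. Inl x \<in> C} = sum \<nu> {y. Inr y \<in> C}"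
    and "\<forall>C\<in>sccs E. {x. Inl x \<in> C} \<noteq> {} \<and> {y. Inr y \<in> C} \<noteq> {}"
proof -
  show closed_eq: "\<forall>X Y. out_closed E (Inl ` X \<union> Inr ` Y) \<or> in_closed E (Inl ` X \<union> Inr ` Y)
              \<longrightarrow> sum \<mu> X = sum \<nu> Y"
  proof (intro allI impI)
    fix X Y
    assume "out_closed E (Inl ` X \<union> Inr ` Y) \<or> in_closed E (Inl ` X \<union> Inr ` Y)"
    then have "\<bar>sum \<mu> X - sum \<nu> Y\<bar> < 1 / real M"
      unfolding E_def using assign_out_closed_bound assign_in_closed_bound by blast
    then show "sum \<mu> X = sum \<nu> Y"
      using scaled_int_sums_eq[of "real M" r X s Y] M unfolding \<mu>_eq \<nu>_eq by simp
  qed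
  show bal: "\<forall>C\<in>sccs E. sum \<mu> {x. Inl x \<in> C} = sum \<nu> {y. Inr y \<in> C}"
    using bipartite_sccs_balanced closed_eq by blast
  have "\<mu> x > 0" "\<nu> y > 0" for x y
    using r[of x] s[of y] M by (simp_all add: \<mu>_eq \<nu>_eq)
  then show "\<forall>C\<in>sccs E. {x. Inl x \<in> C} \<noteq> {} \<and> {y. Inr y \<in> C} \<noteq> {}"
    using bipartite_sccs_sides_nonempty bal by blast
qed

end

theorem mainTheorem7:
  fixes \<mu> :: "'x::finite \<Rightarrow> real" and \<nu> :: "'y::finite \<Rightarrow> real" and M :: nat
    and \<pi>1 \<pi>2 :: "'x \<times> 'y \<Rightarrow> real"
  assumes "is_prob \<mu>" and "is_prob \<nu>" and "M > 0"
    and "\<pi>1 \<in> couplings \<mu> \<nu>" and "\<pi>2 \<in> couplings \<mu> \<nu>"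
  defines "E \<equiv> assign_edge M \<mu> \<nu> \<pi>1 \<pi>2"
  shows
    "(\<forall>v. (\<exists>u. E u v) \<and> (\<exists>w. E v w))
   \<and> (\<forall>X0 Y0. out_closed E (Inl ` X0 \<union> Inr ` Y0)
        \<longrightarrow> \<bar>sum \<mu> X0 - sum \<nu> Y0\<bar> < 1 / real M)
   \<and> (\<forall>X0 Y0. in_closed E (Inl ` X0 \<union> Inr ` Y0)
        \<longrightarrow> \<bar>sum \<mu> X0 - sum \<nu> Y0\<bar> < 1 / real M)
   \<and> (\<forall>(r :: 'x \<Rightarrow> int) (s :: 'y \<Rightarrow> int).
        (\<forall>x. r x > 0) \<and> (\<forall>y. s y > 0)
        \<and> \<mu> = (\<lambda>x. of_int (r x) / real M) \<and> \<nu> = (\<lambda>y. of_int (s y) / real M)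
      \<longrightarrow> (\<forall>X0 Y0. out_closed E (Inl ` X0 \<union> Inr ` Y0) \<or> in_closed E (Inl ` X0 \<union> Inr ` Y0)
              \<longrightarrow> sum \<mu> X0 = sum \<nu> Y0)
        \<and> disjoint_family_on (\<lambda>C. {x. Inl x \<in> C}) (sccs E)
        \<and> (\<Union>C\<in>sccs E. {x. Inl x \<in> C}) = UNIV
        \<and> (\<forall>C\<in>sccs E. {x. Inl x \<in> C} \<noteq> {})
        \<and> disjoint_family_on (\<lambda>C. {y. Inr y \<in> C}) (sccs E)
        \<and> (\<Union>C\<in>sccs E. {y. Inr y \<in> C}) = UNIV
        \<and> (\<forall>C\<in>sccs E. {y. Inr y \<in> C} \<noteq> {})
        \<and> (\<forall>C\<in>sccs E. sum \<mu> {x. Inl x \<in> C} = sum \<nu> {y. Inr y \<in> C}))"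
proof -
  have in_out: "\<forall>v. (\<exists>u. E u v) \<and> (\<exists>w. E v w)"
    unfolding E_def using assign_edge_in_out[OF assms(1-5)] by blast
  have out_bound: "\<forall>X0 Y0. out_closed E (Inl ` X0 \<union> Inr ` Y0)
        \<longrightarrow> \<bar>sum \<mu> X0 - sum \<nu> Y0\<bar> < 1 / real M"
    unfolding E_def using assign_out_closed_bound[OF assms(1-5)] by blast
  have in_bound: "\<forall>X0 Y0. in_closed E (Inl ` X0 \<union> Inr ` Y0)
        \<longrightarrow> \<bar>sum \<mu> X0 - sum \<nu> Y0\<bar> < 1 / real M"
    unfolding E_def using assign_in_closed_bound[OF assms(1-5)] by blast
  note partition = assign_graph_integral_balance[OF assms(1-5), folded E_def]
  show ?thesis
    using in_out out_bound in_bound partition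
      disjoint_family_on_sccs_preimage[of Inl E] disjoint_family_on_sccs_preimage[of Inr E]
      UN_sccs_preimage[of Inl E] UN_sccs_preimage[of Inr E]
    by blast
qed

end
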